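(* Let $\mathcal{F}$ be a set of flows in the Clos network $C_{N,R}$. For all $i\in[R]$ and all positive integers $k$, the number of flows $f\in\mathcal{F}$ with $i(f)=i$ and $\mathrm{dem}(f)>\tfrac1k\cdot OPT(\mathcal{F})$ is at most $N(k-1)$. Similarly, for all $j\in[R]$ and all positive integers $l$, the number of flows $f\in\mathcal{F}$ with $j(f)=j$ and $\mathrm{dem}(f)>\tfrac1l\cdot OPT(\mathcal{F})$ is at most $N(l-1)$.
   Context: Clos network $C_{N,R}$: a directed graph with $N$ middle switches $M_1,\dots,M_N$, $R$ input switches $I_1,\dots,I_R$, $R$ output switches $O_1,\dots,O_R$, source servers $s_i^k$ and destination servers $t_i^k$ ($i\in[R]$, $k\in[N]$), and edges $s_i^kI_i$, $I_iM_m$, $M_mO_i$, $O_it_i^k$; all links have capacity $1$. A flow $f$ leaves input switch $I_{i(f)}$, enters output switch $O_{j(f)}$, and has positive demand $\mathrm{dem}(f)$; a set of flows has total demand at most $1$ leaving each source server and entering each destination server. A routing $r$ assigns each flow a single middle switch $r(f)\in[N]$; its congestion is $\max_{i\in[R],m\in[N]}\max\{\sum_{f:i(f)=i,r(f)=m}\mathrm{dem}(f),\ \sum_{f:j(f)=i,r(f)=m}\mathrm{dem}(f)\}$; $OPT(\mathcal{F})$ is the minimum congestion over all routings of $\mathcal{F}$. *)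

theory Defs
  imports Complex_Main
begin

text \<open>A set of flows is given by a finite index set F of flows
(an abstract type, so distinct flows may share all attributes). Flow f goes from
source server s_{i f}^{sk f} (attached to input switch I_{i f}) to destination server
t_{j f}^{tk f} (attached to output switch O_{j f}) with demand dem f.\<close>

definition valid_flows ::
  "nat \<Rightarrow> nat \<Rightarrow> 'f set \<Rightarrow> ('f \<Rightarrow> nat) \<Rightarrow> ('f \<Rightarrow> nat) \<Rightarrow> ('f \<Rightarrow> nat) \<Rightarrow> ('f \<Rightarrow> nat)
     \<Rightarrow> ('f \<Rightarrow> real) \<Rightarrow> bool" where
  "valid_flows N R F i sk j tk dem \<longleftrightarrow>
     finite F \<and>
     (\<forall>f\<in>F. i f \<in> {1..R} \<and> sk f \<in> {1..N} \<and> j f \<in> {1..R} \<and> tk f \<in> {1..N} \<and> dem f > 0) \<and>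
     (\<forall>a\<in>{1..R}. \<forall>k\<in>{1..N}. (\<Sum>f\<in>{f\<in>F. i f = a \<and> sk f = k}. dem f) \<le> 1) \<and>
     (\<forall>a\<in>{1..R}. \<forall>k\<in>{1..N}. (\<Sum>f\<in>{f\<in>F. j f = a \<and> tk f = k}. dem f) \<le> 1)"

definition is_routing :: "nat \<Rightarrow> 'f set \<Rightarrow> ('f \<Rightarrow> nat) \<Rightarrow> bool" where
  "is_routing N F r \<longleftrightarrow> (\<forall>f\<in>F. r f \<in> {1..N})"

definition congestion ::
  "nat \<Rightarrow> nat \<Rightarrow> 'f set \<Rightarrow> ('f \<Rightarrow> nat) \<Rightarrow> ('f \<Rightarrow> nat) \<Rightarrow> ('f \<Rightarrow> real) \<Rightarrow> ('f \<Rightarrow> nat) \<Rightarrow> real" where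
  "congestion N R F i j dem r =
     Max ((\<lambda>(a, m). max (\<Sum>f\<in>{f\<in>F. i f = a \<and> r f = m}. dem f)
                         (\<Sum>f\<in>{f\<in>F. j f = a \<and> r f = m}. dem f)) ` ({1..R} \<times> {1..N}))"

definition OPT ::
  "nat \<Rightarrow> nat \<Rightarrow> 'f set \<Rightarrow> ('f \<Rightarrow> nat) \<Rightarrow> ('f \<Rightarrow> nat) \<Rightarrow> ('f \<Rightarrow> real) \<Rightarrow> real" where
  "OPT N R F i j dem = Inf {congestion N R F i j dem r | r. is_routing N F r}"

end

theory Submission
  imports Defs "HOL-Library.FuncSet"
begin

text \<open>Fix an optimal routing (one exists, since only the finitely many restrictions of routings
to the flows matter). Through every middle switch, the flows leaving a fixed input switch carry
total demand at most OPT, so fewer than k of them can have demand above OPT/k; summing over the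
N middle switches gives the bound N(k-1). Output switches are symmetric.\<close>

lemma card_heavy_le:
  fixes w :: "'a \<Rightarrow> real"
  assumes "finite A" and nonneg: "\<forall>x\<in>A. w x \<ge> 0" and sum_le: "sum w A \<le> C" and "k \<ge> 1"
  shows "card {x\<in>A. w x > C / real k} \<le> k - 1"
proof (rule ccontr)
  let ?B = "{x\<in>A. w x > C / real k}"
  assume "\<not> card ?B \<le> k - 1"
  then have card_B: "card ?B \<ge> k" by simp
  with \<open>k \<ge> 1\<close> have "?B \<noteq> {}" by (metis card.empty le_zero_eq not_one_le_zero)
  have "finite ?B" using \<open>finite A\<close> by simp
  have "C \<ge> 0" using sum_nonneg[of A w] nonneg sum_le by force
  have "C = real k * (C / real k)" using \<open>k \<ge> 1\<close> by simp
  also have "\<dots> \<le> real (card ?B) * (C / real k)"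
    using card_B \<open>C \<ge> 0\<close> by (intro mult_right_mono) auto
  also have "\<dots> = (\<Sum>x\<in>?B. C / real k)" by simp
  also have "\<dots> < sum w ?B"
    using \<open>finite ?B\<close> \<open>?B \<noteq> {}\<close> by (intro sum_strict_mono) auto
  also have "\<dots> \<le> sum w A"
    using \<open>finite A\<close> nonneg by (intro sum_mono2) auto
  finally show False using sum_le by simp
qed

lemma card_heavy_partition_le:
  fixes w :: "'a \<Rightarrow> real"
  assumes "finite A" "finite M" and nonneg: "\<forall>x\<in>A. w x \<ge> 0" and in_classes: "\<forall>x\<in>A. r x \<in> M"
    and class_sum_le: "\<forall>m\<in>M. sum w {x\<in>A. r x = m} \<le> C" and "k \<ge> 1"
  shows "card {x\<in>A. w x > C / real k} \<le> card M * (k - 1)"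
proof -
  let ?heavy = "\<lambda>m. {x\<in>{x\<in>A. r x = m}. w x > C / real k}"
  have "{x\<in>A. w x > C / real k} = (\<Union>m\<in>M. ?heavy m)" using in_classes by auto
  then have "card {x\<in>A. w x > C / real k} \<le> (\<Sum>m\<in>M. card (?heavy m))"
    using card_UN_le[OF \<open>finite M\<close>] by simp
  also have "\<dots> \<le> (\<Sum>m\<in>M. k - 1)"
    using assms by (intro sum_mono card_heavy_le) auto
  finally show ?thesis by simp
qed

lemma OPT_attained:
  assumes "N \<ge> 1" and "finite F"
  obtains r where "is_routing N F r" and "congestion N R F i j dem r = OPT N R F i j dem"
proof -
  let ?S = "{congestion N R F i j dem r | r. is_routing N F r}"
  have congestion_restrict: "congestion N R F i j dem r = congestion N R F i j dem (restrict r F)" for r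
    unfolding congestion_def
    by (intro arg_cong[where f=Max] image_cong refl)
      (auto intro!: arg_cong2[where f=max] sum.cong simp: restrict_def)
  have "?S \<subseteq> congestion N R F i j dem ` (F \<rightarrow>\<^sub>E {1..N})"
    unfolding is_routing_def using congestion_restrict by fastforce
  then have finite_S: "finite ?S" using \<open>finite F\<close> finite_subset by (blast intro: finite_PiE)
  have "is_routing N F (\<lambda>_. 1)" using \<open>N \<ge> 1\<close> unfolding is_routing_def by simp
  then have nonempty_S: "?S \<noteq> {}" by blast
  have "Inf ?S \<in> ?S"
    using cInf_eq_Min[OF finite_S nonempty_S] Min_in[OF finite_S nonempty_S] by simp
  then show ?thesis using that unfolding OPT_def by auto
qed

lemma load_le_congestion:
  assumes "a \<in> {1..R}" and "m \<in> {1..N}"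
  shows "(\<Sum>f\<in>{f\<in>F. i f = a \<and> r f = m}. dem f) \<le> congestion N R F i j dem r"
    and "(\<Sum>f\<in>{f\<in>F. j f = a \<and> r f = m}. dem f) \<le> congestion N R F i j dem r"
proof -
  have "max (\<Sum>f\<in>{f\<in>F. i f = a \<and> r f = m}. dem f) (\<Sum>f\<in>{f\<in>F. j f = a \<and> r f = m}. dem f)
      \<le> congestion N R F i j dem r"
    unfolding congestion_def using assms by (intro Max_ge) force+
  then show "(\<Sum>f\<in>{f\<in>F. i f = a \<and> r f = m}. dem f) \<le> congestion N R F i j dem r"
    and "(\<Sum>f\<in>{f\<in>F. j f = a \<and> r f = m}. dem f) \<le> congestion N R F i j dem r"
    by simp_all
qed

lemma card_heavy_flows_le:
  fixes dem :: "'f \<Rightarrow> real" and g :: "'f \<Rightarrow> nat"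
  assumes "finite F" "\<forall>f\<in>F. dem f > 0" "is_routing N F r"
    and "\<forall>m\<in>{1..N}. (\<Sum>f\<in>{f\<in>F. g f = a \<and> r f = m}. dem f) \<le> C" and "k \<ge> 1"
  shows "card {f\<in>F. g f = a \<and> dem f > C / real k} \<le> N * (k - 1)"
  using card_heavy_partition_le[of "{f\<in>F. g f = a}" "{1..N}" dem r C k] assms
  unfolding is_routing_def by (simp add: less_imp_le conj_assoc)

theorem mainTheorem9:
  fixes N R :: nat and F :: "'f set" and i sk j tk :: "'f \<Rightarrow> nat" and dem :: "'f \<Rightarrow> real"
  assumes "N \<ge> 1" and "R \<ge> 1"
    and "valid_flows N R F i sk j tk dem"
  shows "(\<forall>a\<in>{1..R}. \<forall>k::nat. k \<ge> 1 \<longrightarrow>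
            card {f\<in>F. i f = a \<and> dem f > OPT N R F i j dem / real k} \<le> N * (k - 1))
       \<and> (\<forall>a\<in>{1..R}. \<forall>l::nat. l \<ge> 1 \<longrightarrow>
            card {f\<in>F. j f = a \<and> dem f > OPT N R F i j dem / real l} \<le> N * (l - 1))"
proof -
  have fin: "finite F" and pos: "\<forall>f\<in>F. dem f > 0"
    using assms(3) unfolding valid_flows_def by auto
  obtain r where routing: "is_routing N F r" and opt: "congestion N R F i j dem r = OPT N R F i j dem"
    using OPT_attained[OF assms(1) fin] by blast
  note heavy = card_heavy_flows_le[OF fin pos routing]
  show ?thesis
  proof (intro conjI ballI allI impI)
    fix a k :: nat assume "a \<in> {1..R}" "k \<ge> 1"
    note loads = load_le_congestion[OF \<open>a \<in> {1..R}\<close>,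
        where N = N and F = F and i = i and j = j and dem = dem and r = r]
    show "card {f\<in>F. i f = a \<and> dem f > OPT N R F i j dem / real k} \<le> N * (k - 1)"
      and "card {f\<in>F. j f = a \<and> dem f > OPT N R F i j dem / real k} \<le> N * (k - 1)"
      using loads \<open>k \<ge> 1\<close> unfolding opt by (intro heavy; blast)+
  qed
qed

end
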